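(* Let $L$ be a polyhedron and $G$ a simplicial group. Then for every $V\in\mathbb Z[G(L)]$ we have $\theta(V)\le\eta(V)$.
   Context: A polyhedron $L$ is a finite simplicial complex of affine simplices in $\mathbb R^\infty$ with a linear order on the vertices of each simplex, compatible with faces; $\hat L$ is the simplicial set obtained by adding degenerate simplices. For a simplicial set $E$, $E(L)$ is the set of simplicial maps $\hat L\to E$; for $y\in L$, $\bar{\bar y}$ is the subpolyhedron of $y$ and its faces. For $T\subset L$ put $E_T=\prod_{y\in T}E(\bar{\bar y})$ and $v\|_T=(v|_{\bar{\bar y}})_{y\in T}$, extended additively to $\mathbb Z[E(L)]\to\mathbb Z[E_T]$ (free abelian groups on these sets). For $V\in\mathbb Z[E(L)]$, $\theta(V)=\inf\{\#T: T\subset L,\ V\|_T\neq0\}\in\mathbb N\cup\{\infty\}$. For a simplicial group $G$, $G(L)$ and $G_L=\prod_{y\in L}G(\bar{\bar y})$ are groups, $\mathbb Z H$ denotes a group ring with augmentation ideal $\Delta(H)$ ($\Delta(H)^0=\mathbb ZH$), and $\eta(V)=\sup\{s\in\mathbb N: V\|_L\in\Delta(G_L)^s\}$. *)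

theory Defs
  imports "HOL-Algebra.Group" "HOL-Library.Sublist" "HOL-Library.Extended_Nat"
begin

text \<open>A simplex is the list of its vertices in the given linear order.\<close>

definition polyhedron :: "'v list set \<Rightarrow> bool" where
  "polyhedron L \<longleftrightarrow> finite L
     \<and> (\<forall>y\<in>L. y \<noteq> [] \<and> distinct y)
     \<and> (\<forall>y\<in>L. \<forall>z. z \<noteq> [] \<and> subseq z y \<longrightarrow> z \<in> L)
     \<and> (\<forall>y\<in>L. \<forall>z\<in>L. set y = set z \<longrightarrow> y = z)"

definition faces :: "'v list set \<Rightarrow> 'v list \<Rightarrow> 'v list set" where
  "faces L y = {z \<in> L. subseq z y}"

text \<open>n-simplices of the simplicial set Lhat: weakly increasing sequences of
  length n+1 of vertices of one simplex (degenerate simplices included).\<close>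
definition Lhat :: "'v list set \<Rightarrow> nat \<Rightarrow> 'v list set" where
  "Lhat L n = {w. length w = Suc n \<and> remdups_adj w \<in> L}"

definition del_at :: "nat \<Rightarrow> 'v list \<Rightarrow> 'v list" where
  "del_at i w = take i w @ drop (Suc i) w"

definition dup_at :: "nat \<Rightarrow> 'v list \<Rightarrow> 'v list" where
  "dup_at i w = take (Suc i) w @ drop i w"

text \<open>X n is the set of n-simplices, d n i : X (n+1) \<rightarrow> X n (i \<le> n+1) are the
  face maps, s n i : X n \<rightarrow> X (n+1) (i \<le> n) the degeneracies.\<close>
definition simplicial_set ::
  "(nat \<Rightarrow> 'a set) \<Rightarrow> (nat \<Rightarrow> nat \<Rightarrow> 'a \<Rightarrow> 'a) \<Rightarrow> (nat \<Rightarrow> nat \<Rightarrow> 'a \<Rightarrow> 'a) \<Rightarrow> bool" where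
  "simplicial_set X d s \<longleftrightarrow>
     (\<forall>n i x. i \<le> Suc n \<and> x \<in> X (Suc n) \<longrightarrow> d n i x \<in> X n)
   \<and> (\<forall>n i x. i \<le> n \<and> x \<in> X n \<longrightarrow> s n i x \<in> X (Suc n))
   \<and> (\<forall>n i j x. i < j \<and> j \<le> Suc (Suc n) \<and> x \<in> X (Suc (Suc n)) \<longrightarrow>
        d n i (d (Suc n) j x) = d n (j - 1) (d (Suc n) i x))
   \<and> (\<forall>n i j x. i < j \<and> j \<le> Suc n \<and> x \<in> X (Suc n) \<longrightarrow>
        d (Suc n) i (s (Suc n) j x) = s n (j - 1) (d n i x))
   \<and> (\<forall>n j x. j \<le> n \<and> x \<in> X n \<longrightarrow> d n j (s n j x) = x \<and> d n (Suc j) (s n j x) = x)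
   \<and> (\<forall>n i j x. Suc j < i \<and> i \<le> Suc (Suc n) \<and> x \<in> X (Suc n) \<longrightarrow>
        d (Suc n) i (s (Suc n) j x) = s n j (d n (i - 1) x))
   \<and> (\<forall>n i j x. i \<le> j \<and> j \<le> n \<and> x \<in> X n \<longrightarrow>
        s (Suc n) i (s n j x) = s (Suc n) (Suc j) (s n i x))"

definition simplicial_group ::
  "(nat \<Rightarrow> 'g monoid) \<Rightarrow> (nat \<Rightarrow> nat \<Rightarrow> 'g \<Rightarrow> 'g) \<Rightarrow> (nat \<Rightarrow> nat \<Rightarrow> 'g \<Rightarrow> 'g) \<Rightarrow> bool" where
  "simplicial_group G d s \<longleftrightarrow>
     (\<forall>n. group (G n))
   \<and> simplicial_set (\<lambda>n. carrier (G n)) d s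
   \<and> (\<forall>n i. i \<le> Suc n \<longrightarrow> d n i \<in> hom (G (Suc n)) (G n))
   \<and> (\<forall>n i. i \<le> n \<longrightarrow> s n i \<in> hom (G n) (G (Suc n)))"

text \<open>E(L): simplicial maps Lhat \<rightarrow> E (represented extensionally: undefined
  outside the simplices of Lhat).\<close>
definition smaps ::
  "'v list set \<Rightarrow> (nat \<Rightarrow> 'a set) \<Rightarrow> (nat \<Rightarrow> nat \<Rightarrow> 'a \<Rightarrow> 'a) \<Rightarrow> (nat \<Rightarrow> nat \<Rightarrow> 'a \<Rightarrow> 'a)
   \<Rightarrow> (nat \<Rightarrow> 'v list \<Rightarrow> 'a) set" where
  "smaps L X d s = {f.
      (\<forall>n w. w \<in> Lhat L n \<longrightarrow> f n w \<in> X n)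
    \<and> (\<forall>n i w. i \<le> Suc n \<and> w \<in> Lhat L (Suc n) \<longrightarrow> f n (del_at i w) = d n i (f (Suc n) w))
    \<and> (\<forall>n i w. i \<le> n \<and> w \<in> Lhat L n \<longrightarrow> f (Suc n) (dup_at i w) = s n i (f n w))
    \<and> (\<forall>n w. w \<notin> Lhat L n \<longrightarrow> f n w = undefined)}"

definition restr :: "'v list set \<Rightarrow> (nat \<Rightarrow> 'v list \<Rightarrow> 'a) \<Rightarrow> (nat \<Rightarrow> 'v list \<Rightarrow> 'a)" where
  "restr K f = (\<lambda>n w. if w \<in> Lhat K n then f n w else undefined)"

text \<open>E_T = prod over y in T of E(faces y), as extensional functions on T.\<close>
definition prodE ::
  "'v list set \<Rightarrow> (nat \<Rightarrow> 'a set) \<Rightarrow> (nat \<Rightarrow> nat \<Rightarrow> 'a \<Rightarrow> 'a) \<Rightarrow> (nat \<Rightarrow> nat \<Rightarrow> 'a \<Rightarrow> 'a)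
   \<Rightarrow> 'v list set \<Rightarrow> ('v list \<Rightarrow> nat \<Rightarrow> 'v list \<Rightarrow> 'a) set" where
  "prodE L X d s T = {u. (\<forall>y\<in>T. u y \<in> smaps (faces L y) X d s) \<and> (\<forall>y. y \<notin> T \<longrightarrow> u y = undefined)}"

definition bar :: "'v list set \<Rightarrow> 'v list set \<Rightarrow> (nat \<Rightarrow> 'v list \<Rightarrow> 'a)
                   \<Rightarrow> ('v list \<Rightarrow> nat \<Rightarrow> 'v list \<Rightarrow> 'a)" where
  "bar L T v = (\<lambda>y. if y \<in> T then restr (faces L y) v else undefined)"

text \<open>Elements of Z[X]: finitely supported integer-valued functions supported in X.\<close>
definition supp :: "('a \<Rightarrow> int) \<Rightarrow> 'a set" where
  "supp x = {g. x g \<noteq> 0}"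

definition free_ab :: "'a set \<Rightarrow> ('a \<Rightarrow> int) set" where
  "free_ab X = {x. finite (supp x) \<and> supp x \<subseteq> X}"

definition linext :: "('a \<Rightarrow> 'b) \<Rightarrow> ('a \<Rightarrow> int) \<Rightarrow> ('b \<Rightarrow> int)" where
  "linext phi V = (\<lambda>u. \<Sum>v\<in>{v\<in>supp V. phi v = u}. V v)"

definition gr_mult :: "('g, 'b) monoid_scheme \<Rightarrow> ('g \<Rightarrow> int) \<Rightarrow> ('g \<Rightarrow> int) \<Rightarrow> ('g \<Rightarrow> int)" where
  "gr_mult H x y = (\<lambda>g. \<Sum>h\<in>supp x. \<Sum>k\<in>supp y. if h \<otimes>\<^bsub>H\<^esub> k = g then x h * y k else 0)"

definition aug :: "('g, 'b) monoid_scheme \<Rightarrow> ('g \<Rightarrow> int) set" where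
  "aug H = {x \<in> free_ab (carrier H). (\<Sum>g\<in>supp x. x g) = 0}"

inductive_set zspan :: "('g \<Rightarrow> int) set \<Rightarrow> ('g \<Rightarrow> int) set" for S where
  zero: "(\<lambda>_. 0) \<in> zspan S"
| gen: "a \<in> S \<Longrightarrow> a \<in> zspan S"
| add: "a \<in> zspan S \<Longrightarrow> b \<in> zspan S \<Longrightarrow> (\<lambda>g. a g + b g) \<in> zspan S"
| neg: "a \<in> zspan S \<Longrightarrow> (\<lambda>g. - a g) \<in> zspan S"

fun aug_pow :: "('g, 'b) monoid_scheme \<Rightarrow> nat \<Rightarrow> ('g \<Rightarrow> int) set" where
  "aug_pow H 0 = free_ab (carrier H)"
| "aug_pow H (Suc n) = zspan {gr_mult H a b | a b. a \<in> aug_pow H n \<and> b \<in> aug H}"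

definition GL :: "'v list set \<Rightarrow> (nat \<Rightarrow> 'g monoid) \<Rightarrow> (nat \<Rightarrow> nat \<Rightarrow> 'g \<Rightarrow> 'g)
                  \<Rightarrow> (nat \<Rightarrow> nat \<Rightarrow> 'g \<Rightarrow> 'g) \<Rightarrow> ('v list \<Rightarrow> nat \<Rightarrow> 'v list \<Rightarrow> 'g) monoid" where
  "GL L G d s = \<lparr> carrier = prodE L (\<lambda>n. carrier (G n)) d s L,
     mult = (\<lambda>a b. \<lambda>y. if y \<in> L then (\<lambda>n w. if w \<in> Lhat (faces L y) n
                         then a y n w \<otimes>\<^bsub>G n\<^esub> b y n w else undefined) else undefined),
     one = (\<lambda>y. if y \<in> L then (\<lambda>n w. if w \<in> Lhat (faces L y) n
                         then \<one>\<^bsub>G n\<^esub> else undefined) else undefined) \<rparr>"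

definition theta :: "'v list set \<Rightarrow> ((nat \<Rightarrow> 'v list \<Rightarrow> 'a) \<Rightarrow> int) \<Rightarrow> enat" where
  "theta L V = Inf {enat (card T) | T. T \<subseteq> L \<and> linext (bar L T) V \<noteq> (\<lambda>_. 0)}"

definition eta :: "'v list set \<Rightarrow> (nat \<Rightarrow> 'g monoid) \<Rightarrow> (nat \<Rightarrow> nat \<Rightarrow> 'g \<Rightarrow> 'g)
                   \<Rightarrow> (nat \<Rightarrow> nat \<Rightarrow> 'g \<Rightarrow> 'g) \<Rightarrow> ((nat \<Rightarrow> 'v list \<Rightarrow> 'g) \<Rightarrow> int) \<Rightarrow> enat" where
  "eta L G d s V = Sup (enat ` {k. linext (bar L L) V \<in> aug_pow (GL L G d s) k})"

end

theory Submission
  imports Defs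
begin

text \<open>
  In the group ring \<int>G_L every h \<in> G_L is the product, over the simplices y of L, of the
  elements h_y that agree with h in the y-component and are trivial elsewhere. Hence
  [h] = \<Prod>y. (1 + ([h_y] - 1)) = \<Sum>S \<subseteq> L. \<Prod>y \<in> S. ([h_y] - 1), where the S-summand lies in
  \<Delta>^|S| and, expanded by inclusion-exclusion, depends only on the restrictions of h to the
  subsets T \<subseteq> S. For h = v\<parallel>_L, summed with the coefficients of V, each summand with
  |S| < \<theta>(V) is a combination of the vanishing elements V\<parallel>_T (T \<subseteq> S); so
  V\<parallel>_L \<in> \<Delta>^\<theta>(V).
\<close>

definition formal_sum :: "'i set \<Rightarrow> ('i \<Rightarrow> int) \<Rightarrow> ('i \<Rightarrow> 'g) \<Rightarrow> ('g \<Rightarrow> int)" where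
  "formal_sum I c p = (\<lambda>g. \<Sum>i\<in>I. c i * of_bool (p i = g))"

lemma supp_formal_sum: "supp (formal_sum I c p) \<subseteq> p ` I"
  unfolding supp_def formal_sum_def
  by (auto elim: sum.not_neutral_contains_not_neutral)

lemma formal_sum_in_free_ab: "finite I \<Longrightarrow> p ` I \<subseteq> C \<Longrightarrow> formal_sum I c p \<in> free_ab C"
  unfolding free_ab_def using supp_formal_sum[of I c p] by (auto intro: finite_subset)

lemma sum_formal_sum_mult:
  assumes "finite I" "finite P" "p ` I \<subseteq> P"
  shows "(\<Sum>g\<in>P. formal_sum I c p g * F g) = (\<Sum>i\<in>I. c i * F (p i))"
proof -
  have "(\<Sum>g\<in>P. formal_sum I c p g * F g) = (\<Sum>i\<in>I. \<Sum>g\<in>P. c i * (of_bool (p i = g) * F g))"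
    unfolding formal_sum_def sum_distrib_right by (subst sum.swap) (simp add: mult.assoc)
  also have "\<dots> = (\<Sum>i\<in>I. c i * F (p i))"
  proof (intro sum.cong refl)
    fix i assume "i \<in> I"
    have "(\<Sum>g\<in>P. of_bool (p i = g) * F g) = (\<Sum>g\<in>P. if g = p i then F g else 0)"
      by (intro sum.cong) auto
    then show "(\<Sum>g\<in>P. c i * (of_bool (p i = g) * F g)) = c i * F (p i)"
      using assms \<open>i \<in> I\<close> by (auto simp flip: sum_distrib_left)
  qed
  finally show ?thesis .
qed

lemma sum_formal_sum_supp:
  assumes "finite I"
  shows "(\<Sum>g\<in>supp (formal_sum I c p). formal_sum I c p g) = (\<Sum>i\<in>I. c i)"
proof -
  have "(\<Sum>g\<in>supp (formal_sum I c p). formal_sum I c p g) = (\<Sum>g\<in>p ` I. formal_sum I c p g)"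
    using assms supp_formal_sum[of I c p] by (intro sum.mono_neutral_left) (auto simp: supp_def)
  also have "\<dots> = (\<Sum>i\<in>I. c i)"
    using sum_formal_sum_mult[of I "p ` I" p c "\<lambda>_. 1"] assms by simp
  finally show ?thesis .
qed

lemma formal_sum_reindex:
  assumes "bij_betw \<phi> I J" "\<And>i. i \<in> I \<Longrightarrow> c' (\<phi> i) = c i" "\<And>i. i \<in> I \<Longrightarrow> p' (\<phi> i) = p i"
  shows "formal_sum I c p = formal_sum J c' p'"
  unfolding formal_sum_def using assms by (auto simp: sum.reindex_bij_betw[OF assms(1), symmetric])

lemma linext_eq_formal_sum: "finite (supp V) \<Longrightarrow> linext phi V = formal_sum (supp V) V phi"
  unfolding linext_def formal_sum_def by (auto simp: Int_def)

lemma gr_mult_eq_sum: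
  assumes "finite P" "supp x \<subseteq> P" "finite Q" "supp y \<subseteq> Q"
  shows "gr_mult H x y g = (\<Sum>h\<in>P. x h * (\<Sum>k\<in>Q. y k * of_bool (h \<otimes>\<^bsub>H\<^esub> k = g)))"
proof -
  have "gr_mult H x y g = (\<Sum>h\<in>supp x. \<Sum>k\<in>supp y. x h * (y k * of_bool (h \<otimes>\<^bsub>H\<^esub> k = g)))"
    unfolding gr_mult_def by (intro sum.cong refl) auto
  also have "\<dots> = (\<Sum>h\<in>supp x. \<Sum>k\<in>Q. x h * (y k * of_bool (h \<otimes>\<^bsub>H\<^esub> k = g)))"
    using assms by (intro sum.cong refl sum.mono_neutral_left) (auto simp: supp_def)
  also have "\<dots> = (\<Sum>h\<in>P. \<Sum>k\<in>Q. x h * (y k * of_bool (h \<otimes>\<^bsub>H\<^esub> k = g)))"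
    using assms by (intro sum.mono_neutral_left) (auto simp: supp_def)
  finally show ?thesis by (simp add: sum_distrib_left)
qed

lemma gr_mult_formal_sum:
  assumes "finite I" "finite J"
  shows "gr_mult H (formal_sum I a p) (formal_sum J b q) =
         formal_sum (I \<times> J) (\<lambda>(i,j). a i * b j) (\<lambda>(i,j). p i \<otimes>\<^bsub>H\<^esub> q j)"
proof
  fix g
  have "gr_mult H (formal_sum I a p) (formal_sum J b q) g
      = (\<Sum>h\<in>p ` I. formal_sum I a p h * (\<Sum>k\<in>q ` J. formal_sum J b q k * of_bool (h \<otimes>\<^bsub>H\<^esub> k = g)))"
    using assms supp_formal_sum[of I a p] supp_formal_sum[of J b q] by (intro gr_mult_eq_sum) auto
  also have "\<dots> = (\<Sum>h\<in>p ` I. formal_sum I a p h * (\<Sum>j\<in>J. b j * of_bool (h \<otimes>\<^bsub>H\<^esub> q j = g)))"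
    using assms by (intro sum.cong refl arg_cong2[where f = "(*)"] sum_formal_sum_mult) auto
  also have "\<dots> = (\<Sum>i\<in>I. a i * (\<Sum>j\<in>J. b j * of_bool (p i \<otimes>\<^bsub>H\<^esub> q j = g)))"
    using assms by (intro sum_formal_sum_mult) auto
  also have "\<dots> = formal_sum (I \<times> J) (\<lambda>(i,j). a i * b j) (\<lambda>(i,j). p i \<otimes>\<^bsub>H\<^esub> q j) g"
    unfolding formal_sum_def
    by (simp add: sum_distrib_left sum.cartesian_product split_def mult.assoc)
  finally show "gr_mult H (formal_sum I a p) (formal_sum J b q) g = \<dots>" .
qed

lemma zero_in_aug_pow: "(\<lambda>_. 0) \<in> aug_pow H k"
  by (cases k) (auto simp: free_ab_def supp_def intro: zspan.zero)

lemma add_in_aug_pow: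
  assumes "a \<in> aug_pow H k" "b \<in> aug_pow H k"
  shows "(\<lambda>g. a g + b g) \<in> aug_pow H k"
proof (cases k)
  case 0
  have "supp (\<lambda>g. a g + b g) \<subseteq> supp a \<union> supp b" by (auto simp: supp_def)
  then show ?thesis using 0 assms by (auto simp: free_ab_def intro: finite_subset)
next
  case Suc
  then show ?thesis using assms by (auto intro: zspan.add)
qed

lemma uminus_in_aug_pow: "a \<in> aug_pow H k \<Longrightarrow> (\<lambda>g. - a g) \<in> aug_pow H k"
  by (cases k) (auto simp: free_ab_def supp_def intro: zspan.neg)

lemma scale_in_aug_pow:
  assumes "a \<in> aug_pow H k"
  shows "(\<lambda>g. c * a g) \<in> aug_pow H k"
proof -
  have nat_scale: "(\<lambda>g. int n * a g) \<in> aug_pow H k" for n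
    by (induction n) (use assms zero_in_aug_pow add_in_aug_pow in \<open>auto simp: distrib_right\<close>)
  show ?thesis
  proof (cases "0 \<le> c")
    case True
    then show ?thesis using nat_scale[of "nat c"] by simp
  next
    case False
    then show ?thesis using uminus_in_aug_pow[OF nat_scale[of "nat (- c)"]] by simp
  qed
qed

lemma sum_in_aug_pow:
  assumes "finite A" "\<And>x. x \<in> A \<Longrightarrow> f x \<in> aug_pow H k"
  shows "(\<lambda>g. \<Sum>x\<in>A. c x * f x g) \<in> aug_pow H k"
  using assms
proof (induction A rule: finite_induct)
  case empty
  then show ?case using zero_in_aug_pow by simp
next
  case (insert x A)
  then show ?case by (simp add: add_in_aug_pow scale_in_aug_pow)
qed

lemma subseq_dropWhile: "subseq xs ys \<Longrightarrow> subseq (dropWhile P xs) (dropWhile P ys)"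
proof (induction rule: list_emb.induct)
  case (list_emb_Cons xs ys y)
  have "subseq (dropWhile P ys) (y # ys)"
    using suffix_imp_subseq[OF suffix_dropWhile] by auto
  then show ?case using list_emb_Cons by (auto intro: list_emb_trans)
qed auto

lemma subseq_remdups_adj: "subseq xs ys \<Longrightarrow> subseq (remdups_adj xs) (remdups_adj ys)"
proof (induction ys arbitrary: xs rule: length_induct)
  case (1 ys)
  show ?case
  proof (cases "xs = [] \<or> ys = []")
    case True
    then show ?thesis using "1.prems" by auto
  next
    case False
    then obtain x xs' y ys' where xs: "xs = x # xs'" and ys: "ys = y # ys'"
      by (auto simp: neq_Nil_conv)
    show ?thesis
    proof (cases "x = y \<and> subseq xs' ys'")
      case True
      let ?drop = "dropWhile (\<lambda>z. z = x)"
      have "length (?drop ys') < length ys"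
        using ys by (simp add: le_imp_less_Suc length_dropWhile_le)
      then have "subseq (remdups_adj (?drop xs')) (remdups_adj (?drop ys'))"
        using "1.IH" True subseq_dropWhile by blast
      then show ?thesis using True xs ys by (simp add: remdups_adj_Cons')
    next
      case False
      then have "subseq (remdups_adj xs) (remdups_adj ys')"
        using "1.IH" "1.prems" xs ys by auto
      moreover have "subseq (remdups_adj ys') (remdups_adj ys)"
        using ys by (cases ys') (auto simp: remdups_adj_Cons split: list.split)
      ultimately show ?thesis by (rule subseq_order.order_trans)
    qed
  qed
qed

lemma remdups_adj_dup_at: "i < length w \<Longrightarrow> remdups_adj (dup_at i w) = remdups_adj w"
proof -
  assume i: "i < length w"
  then have "dup_at i w = take i w @ w ! i # w ! i # drop (Suc i) w"
    unfolding dup_at_def by (simp add: take_Suc_conv_app_nth Cons_nth_drop_Suc)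
  moreover have "w = take i w @ w ! i # drop (Suc i) w"
    using i by (simp add: id_take_nth_drop)
  moreover have "remdups_adj (take i w @ w ! i # w ! i # drop (Suc i) w)
      = remdups_adj (take i w @ w ! i # drop (Suc i) w)"
    by (subst (1 2) remdups_adj_append) simp
  ultimately show ?thesis by simp
qed

lemma subseq_del_at: "subseq (del_at i w) w"
proof -
  have "subseq (drop (Suc i) w) (drop i w)"
    using suffix_imp_subseq[OF suffix_drop, of 1 "drop i w"] by simp
  then have "subseq (take i w @ drop (Suc i) w) (take i w @ drop i w)"
    by (rule list_emb_append_mono[OF subseq_order.order_refl])
  then show ?thesis unfolding del_at_def by simp
qed

locale polyhedron_simplicial_group =
  fixes L :: "'v list set" and G :: "nat \<Rightarrow> 'g monoid" and d s :: "nat \<Rightarrow> nat \<Rightarrow> 'g \<Rightarrow> 'g"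
  assumes polyhedron: "polyhedron L" and simplicial_group: "simplicial_group G d s"
begin

abbreviation H :: "('v list \<Rightarrow> nat \<Rightarrow> 'v list \<Rightarrow> 'g) monoid" where
  "H \<equiv> GL L G d s"

abbreviation carriers :: "nat \<Rightarrow> 'g set" where
  "carriers \<equiv> \<lambda>n. carrier (G n)"

lemma group_G: "group (G n)"
  using simplicial_group unfolding simplicial_group_def by auto

lemma face_one: "i \<le> Suc n \<Longrightarrow> d n i \<one>\<^bsub>G (Suc n)\<^esub> = \<one>\<^bsub>G n\<^esub>"
  using simplicial_group group_G unfolding simplicial_group_def by (auto intro: hom_one)

lemma degeneracy_one: "i \<le> n \<Longrightarrow> s n i \<one>\<^bsub>G n\<^esub> = \<one>\<^bsub>G (Suc n)\<^esub>"
  using simplicial_group group_G unfolding simplicial_group_def by (auto intro: hom_one)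

lemma finite_L: "finite L"
  using polyhedron unfolding polyhedron_def by auto

lemma faces_subset: "faces L y \<subseteq> L"
  unfolding faces_def by auto

lemma faces_closed: "z \<in> faces L y \<Longrightarrow> z' \<noteq> [] \<Longrightarrow> subseq z' z \<Longrightarrow> z' \<in> faces L y"
  using polyhedron unfolding faces_def polyhedron_def by (auto intro: list_emb_trans)

lemma Lhat_faces_in_Lhat: "w \<in> Lhat (faces L y) n \<Longrightarrow> w \<in> Lhat L n"
  unfolding Lhat_def using faces_subset by auto

lemma del_at_in_Lhat_faces:
  assumes w: "w \<in> Lhat (faces L y) (Suc n)" and i: "i \<le> Suc n"
  shows "del_at i w \<in> Lhat (faces L y) n"
proof -
  have len: "length (del_at i w) = Suc n"
    using w i unfolding Lhat_def del_at_def by auto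
  then have "remdups_adj (del_at i w) \<noteq> []" by auto
  moreover have "subseq (remdups_adj (del_at i w)) (remdups_adj w)"
    by (rule subseq_remdups_adj[OF subseq_del_at])
  ultimately show ?thesis using w len faces_closed unfolding Lhat_def by auto
qed

lemma dup_at_in_Lhat: "w \<in> Lhat K n \<Longrightarrow> i \<le> n \<Longrightarrow> dup_at i w \<in> Lhat K (Suc n)"
  unfolding Lhat_def using remdups_adj_dup_at[of i w] by (auto simp: dup_at_def)

lemma one_GL: "\<one>\<^bsub>H\<^esub> = (\<lambda>y. if y \<in> L then (\<lambda>n w. if w \<in> Lhat (faces L y) n
                         then \<one>\<^bsub>G n\<^esub> else undefined) else undefined)"
  unfolding GL_def by simp

lemma mult_GL: "a \<otimes>\<^bsub>H\<^esub> b = (\<lambda>y. if y \<in> L then (\<lambda>n w. if w \<in> Lhat (faces L y) n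
                         then a y n w \<otimes>\<^bsub>G n\<^esub> b y n w else undefined) else undefined)"
  unfolding GL_def by simp

lemma carrier_GL: "carrier H = prodE L carriers d s L"
  unfolding GL_def by simp

lemma one_GL_component_in_smaps: "y \<in> L \<Longrightarrow> \<one>\<^bsub>H\<^esub> y \<in> smaps (faces L y) carriers d s"
  unfolding smaps_def one_GL
  by (auto simp: del_at_in_Lhat_faces dup_at_in_Lhat face_one degeneracy_one group.is_monoid group_G)

lemma one_GL_in_carrier: "\<one>\<^bsub>H\<^esub> \<in> carrier H"
  unfolding carrier_GL prodE_def using one_GL_component_in_smaps by (auto simp: one_GL)

lemma restr_faces_in_smaps:
  "y \<in> L \<Longrightarrow> v \<in> smaps L carriers d s \<Longrightarrow> restr (faces L y) v \<in> smaps (faces L y) carriers d s"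
  unfolding smaps_def restr_def
  by (auto simp: Lhat_faces_in_Lhat del_at_in_Lhat_faces dup_at_in_Lhat)

lemma bar_in_carrier_GL: "v \<in> smaps L carriers d s \<Longrightarrow> bar L L v \<in> carrier H"
  unfolding carrier_GL prodE_def bar_def using restr_faces_in_smaps by auto

definition trunc :: "'v list set \<Rightarrow> ('v list \<Rightarrow> nat \<Rightarrow> 'v list \<Rightarrow> 'g)
                     \<Rightarrow> ('v list \<Rightarrow> nat \<Rightarrow> 'v list \<Rightarrow> 'g)" where
  "trunc T h = (\<lambda>y. if y \<in> T then h y else \<one>\<^bsub>H\<^esub> y)"

lemma trunc_in_carrier: "h \<in> carrier H \<Longrightarrow> trunc T h \<in> carrier H"
  using one_GL_in_carrier unfolding carrier_GL prodE_def trunc_def by auto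

lemma trunc_L: "h \<in> carrier H \<Longrightarrow> trunc L h = h"
  unfolding carrier_GL prodE_def trunc_def one_GL by auto

lemma trunc_bar: "T \<subseteq> L \<Longrightarrow> trunc T (bar L L v) = trunc T (bar L T v)"
  unfolding trunc_def bar_def by (auto intro!: ext)

lemma trunc_mult_one: "h \<in> carrier H \<Longrightarrow> trunc T h \<otimes>\<^bsub>H\<^esub> \<one>\<^bsub>H\<^esub> = trunc T h"
proof (rule ext)
  fix y assume h: "h \<in> carrier H"
  show "(trunc T h \<otimes>\<^bsub>H\<^esub> \<one>\<^bsub>H\<^esub>) y = trunc T h y"
  proof (cases "y \<in> L")
    case True
    then have hy: "h y \<in> smaps (faces L y) carriers d s"
      using h unfolding carrier_GL prodE_def by auto
    then show ?thesis using True group_G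
      unfolding mult_GL trunc_def one_GL smaps_def by (auto intro!: ext simp: group.is_monoid monoid.r_one)
  next
    case False
    then show ?thesis using h unfolding mult_GL trunc_def one_GL carrier_GL prodE_def by auto
  qed
qed

lemma trunc_insert:
  assumes h: "h \<in> carrier H" and y: "y \<notin> T"
  shows "trunc T h \<otimes>\<^bsub>H\<^esub> trunc {y} h = trunc (insert y T) h"
proof (rule ext)
  fix z
  show "(trunc T h \<otimes>\<^bsub>H\<^esub> trunc {y} h) z = trunc (insert y T) h z"
  proof (cases "z \<in> L")
    case True
    then have hz: "h z \<in> smaps (faces L z) carriers d s"
      using h unfolding carrier_GL prodE_def by auto
    then show ?thesis using True y group_G
      unfolding mult_GL trunc_def one_GL smaps_def
      by (auto intro!: ext simp: group.is_monoid monoid.r_one monoid.l_one monoid.one_closed)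
  next
    case False
    then show ?thesis using h unfolding mult_GL trunc_def one_GL carrier_GL prodE_def by auto
  qed
qed

text \<open>\<open>aug_gen y h\<close> is \<open>[h_y] - [1]\<close> and \<open>aug_prod S h\<close> is the expansion of
  \<open>\<Prod>y \<in> S. ([h_y] - 1)\<close>, where \<open>h_T = trunc T h\<close> (see \<open>aug_prod_insert\<close>).\<close>

definition aug_gen :: "'v list \<Rightarrow> ('v list \<Rightarrow> nat \<Rightarrow> 'v list \<Rightarrow> 'g)
                       \<Rightarrow> (('v list \<Rightarrow> nat \<Rightarrow> 'v list \<Rightarrow> 'g) \<Rightarrow> int)" where
  "aug_gen y h = formal_sum UNIV (\<lambda>b. if b then 1 else -1) (\<lambda>b. if b then trunc {y} h else \<one>\<^bsub>H\<^esub>)"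

definition aug_prod :: "'v list set \<Rightarrow> ('v list \<Rightarrow> nat \<Rightarrow> 'v list \<Rightarrow> 'g)
                        \<Rightarrow> (('v list \<Rightarrow> nat \<Rightarrow> 'v list \<Rightarrow> 'g) \<Rightarrow> int)" where
  "aug_prod S h = formal_sum (Pow S) (\<lambda>T. (-1) ^ (card S - card T)) (\<lambda>T. trunc T h)"

lemma aug_gen_in_aug: "h \<in> carrier H \<Longrightarrow> aug_gen y h \<in> aug H"
  unfolding aug_def aug_gen_def
  using trunc_in_carrier one_GL_in_carrier
  by (auto simp: sum_formal_sum_supp UNIV_bool intro!: formal_sum_in_free_ab)

lemma aug_prod_insert:
  assumes "finite S" "y \<notin> S" "h \<in> carrier H"
  shows "aug_prod (insert y S) h = gr_mult H (aug_prod S h) (aug_gen y h)"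
proof -
  let ?ins = "\<lambda>(T, b). if b then insert y T else T"
  have "gr_mult H (aug_prod S h) (aug_gen y h) =
     formal_sum (Pow S \<times> UNIV) (\<lambda>(T, b). (-1) ^ (card S - card T) * (if b then 1 else -1))
       (\<lambda>(T, b). trunc T h \<otimes>\<^bsub>H\<^esub> (if b then trunc {y} h else \<one>\<^bsub>H\<^esub>))"
    unfolding aug_prod_def aug_gen_def using assms by (intro gr_mult_formal_sum) auto
  also have "\<dots> = aug_prod (insert y S) h"
    unfolding aug_prod_def
  proof (rule formal_sum_reindex)
    show "bij_betw ?ins (Pow S \<times> UNIV) (Pow (insert y S))"
      by (rule bij_betw_byWitness[where f' = "\<lambda>U. (U - {y}, y \<in> U)"])
        (use assms in \<open>auto split: if_splits\<close>)
  next
    fix i assume "i \<in> Pow S \<times> (UNIV :: bool set)"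
    moreover obtain T b where i: "i = (T, b)" by fastforce
    ultimately have T: "T \<subseteq> S" "y \<notin> T" "card T \<le> card S"
      using assms by (auto intro: card_mono)
    show "(-1) ^ (card (insert y S) - card (?ins i)) =
        (\<lambda>(T, b). (-1) ^ (card S - card T) * (if b then 1 else -1 :: int)) i"
      using T assms finite_subset[OF T(1)] unfolding i by (auto simp: Suc_diff_le)
    show "trunc (?ins i) h = (\<lambda>(T, b). trunc T h \<otimes>\<^bsub>H\<^esub> (if b then trunc {y} h else \<one>\<^bsub>H\<^esub>)) i"
      using T assms unfolding i by (auto simp: trunc_insert trunc_mult_one)
  qed
  finally show ?thesis ..
qed

lemma aug_prod_in_aug_pow:
  assumes "finite S" "h \<in> carrier H" "n \<le> card S"
  shows "aug_prod S h \<in> aug_pow H n"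
  using assms
proof (induction S arbitrary: n rule: finite_induct)
  case empty
  then show ?case
    unfolding aug_prod_def using trunc_in_carrier by (auto intro: formal_sum_in_free_ab)
next
  case (insert y S)
  show ?case
  proof (cases n)
    case 0
    then show ?thesis
      unfolding aug_prod_def using insert trunc_in_carrier by (auto intro: formal_sum_in_free_ab)
  next
    case (Suc m)
    have "aug_prod S h \<in> aug_pow H m" "aug_gen y h \<in> aug H"
      using Suc insert aug_gen_in_aug by auto
    then show ?thesis
      using Suc insert by (auto simp: aug_prod_insert intro!: zspan.gen)
  qed
qed

lemma sum_aug_prod:
  assumes "h \<in> carrier H"
  shows "(\<Sum>S\<in>Pow L. aug_prod S h g) = of_bool (h = g)"
proof -
  let ?f = "\<lambda>T. of_bool (trunc T h = g) :: int"
  let ?g = "\<lambda>S. (-1) ^ card S * aug_prod S h g"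
  have alternating: "?g S = (\<Sum>T\<in>Pow S. (-1) ^ card T * ?f T)" if "finite S" for S
  proof -
    have "(-1) ^ card S * (-1) ^ (card S - card T) = ((-1) ^ card T :: int)" if "T \<subseteq> S" for T
    proof -
      obtain j where card: "card S = card T + j"
        using card_mono[OF \<open>finite S\<close> \<open>T \<subseteq> S\<close>] le_Suc_ex by blast
      have "(-1::int) ^ j * (-1) ^ j = 1" by (simp flip: power_add)
      then show ?thesis unfolding card by (simp add: power_add mult.assoc)
    qed
    then show ?thesis
      unfolding aug_prod_def formal_sum_def sum_distrib_left
      by (intro sum.cong refl) (simp add: mult.assoc[symmetric])
  qed
  have "?f L = (\<Sum>S\<in>Pow L. (-1) ^ card S * ?g S)"
    by (rule inclusion_exclusion_symmetric[where g = ?g]) (use alternating finite_L in auto)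
  also have "\<dots> = (\<Sum>S\<in>Pow L. aug_prod S h g)"
    by (simp add: mult.assoc[symmetric] power_add[symmetric])
  finally show ?thesis using trunc_L[OF assms] by simp
qed

lemma combination_aug_prod_eq_zero:
  assumes V: "finite (supp V)" and S: "S \<subseteq> L"
    and vanish: "\<And>T. T \<subseteq> S \<Longrightarrow> linext (bar L T) V = (\<lambda>_. 0)"
  shows "(\<Sum>v\<in>supp V. V v * aug_prod S (bar L L v) g) = 0"
proof -
  have "(\<Sum>v\<in>supp V. V v * aug_prod S (bar L L v) g)
      = (\<Sum>T\<in>Pow S. (-1) ^ (card S - card T) * (\<Sum>v\<in>supp V. V v * of_bool (trunc T (bar L T v) = g)))"
    unfolding aug_prod_def formal_sum_def sum_distrib_left
    using S by (subst sum.swap) (auto simp: trunc_bar ac_simps intro!: sum.cong)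
  also have "\<dots> = 0"
  proof (intro sum.neutral ballI)
    fix T assume "T \<in> Pow S"
    have "(\<Sum>v\<in>supp V. V v * of_bool (trunc T (bar L T v) = g))
        = (\<Sum>u\<in>bar L T ` supp V. linext (bar L T) V u * of_bool (trunc T u = g))"
      unfolding linext_eq_formal_sum[OF V] by (rule sum_formal_sum_mult[symmetric]) (use V in auto)
    then show "(-1) ^ (card S - card T) * (\<Sum>v\<in>supp V. V v * of_bool (trunc T (bar L T v) = g)) = 0"
      using vanish \<open>T \<in> Pow S\<close> by simp
  qed
  finally show ?thesis .
qed

lemma linext_bar_in_aug_pow:
  assumes V: "V \<in> free_ab (smaps L carriers d s)"
    and vanish: "\<And>T. T \<subseteq> L \<Longrightarrow> card T < k \<Longrightarrow> linext (bar L T) V = (\<lambda>_. 0)"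
  shows "linext (bar L L) V \<in> aug_pow H k"
proof -
  have finV: "finite (supp V)" and bar: "\<And>v. v \<in> supp V \<Longrightarrow> bar L L v \<in> carrier H"
    using V bar_in_carrier_GL unfolding free_ab_def by auto
  define C where "C S = (\<lambda>g. \<Sum>v\<in>supp V. V v * aug_prod S (bar L L v) g)" for S
  have expand: "linext (bar L L) V = (\<lambda>g. \<Sum>S\<in>Pow L. 1 * C S g)"
  proof
    fix g
    have "linext (bar L L) V g = (\<Sum>v\<in>supp V. V v * (\<Sum>S\<in>Pow L. aug_prod S (bar L L v) g))"
      using finV bar by (simp add: linext_eq_formal_sum formal_sum_def sum_aug_prod)
    then show "linext (bar L L) V g = (\<Sum>S\<in>Pow L. 1 * C S g)"
      unfolding C_def sum_distrib_left by (simp add: sum.swap[of _ "supp V"])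
  qed
  have "C S \<in> aug_pow H k" if S: "S \<subseteq> L" for S
  proof (cases "k \<le> card S")
    case True
    then show ?thesis unfolding C_def
      using finite_subset[OF S finite_L] bar finV by (intro sum_in_aug_pow aug_prod_in_aug_pow) auto
  next
    case False
    have "T \<subseteq> S \<Longrightarrow> card T < k" for T
      using False finite_subset[OF S finite_L] card_mono[of S T] by auto
    then have "C S = (\<lambda>_. 0)"
      unfolding C_def using finV S vanish by (auto intro!: ext combination_aug_prod_eq_zero)
    then show ?thesis using zero_in_aug_pow by simp
  qed
  then show ?thesis unfolding expand using finite_L by (intro sum_in_aug_pow) auto
qed

end

lemma le_Sup_enat_image:
  assumes "\<And>k. enat k \<le> x \<Longrightarrow> k \<in> K"
  shows "x \<le> Sup (enat ` K)"
proof (cases x)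
  case (enat m)
  then show ?thesis using assms by (auto intro: Sup_upper)
next
  case infinity
  then have "K = UNIV" using assms by auto
  moreover have "infinite (range enat)"
    by (auto dest: finite_imageD simp: inj_on_def)
  ultimately show ?thesis using infinity by (simp add: Sup_enat_def)
qed

lemma linext_bar_eq_zero_below_theta:
  assumes "enat k \<le> theta L V" "T \<subseteq> L" "card T < k"
  shows "linext (bar L T) V = (\<lambda>_. 0)"
proof (rule ccontr)
  assume "linext (bar L T) V \<noteq> (\<lambda>_. 0)"
  then have "theta L V \<le> enat (card T)"
    unfolding theta_def using assms(2) by (auto intro: Inf_lower)
  then show False using assms(1,3) by (metis enat_ord_simps(1) leD order_trans)
qed

theorem mainTheorem6:
  fixes L :: "'v list set" and G :: "nat \<Rightarrow> 'g monoid"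
    and d s :: "nat \<Rightarrow> nat \<Rightarrow> 'g \<Rightarrow> 'g"
    and V :: "(nat \<Rightarrow> 'v list \<Rightarrow> 'g) \<Rightarrow> int"
  assumes "polyhedron L"
    and "simplicial_group G d s"
    and "V \<in> free_ab (smaps L (\<lambda>n. carrier (G n)) d s)"
  shows "theta L V \<le> eta L G d s V"
proof -
  interpret polyhedron_simplicial_group L G d s
    using assms(1,2) by unfold_locales
  have "linext (bar L L) V \<in> aug_pow (GL L G d s) k" if "enat k \<le> theta L V" for k
    using assms(3) linext_bar_eq_zero_below_theta[OF that] by (rule linext_bar_in_aug_pow)
  then show ?thesis unfolding eta_def by (intro le_Sup_enat_image) simp
qed

end
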